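(* Consider the batched co-player shaping POMDP described in the context, with ego agent $i$ using the factorized policy with shared parameters $\phi^i$, and let $$\bar J(\phi^i)=\mathbb{E}_{\bar P^{\phi^i}}\Big[\tfrac1B\sum_{b=1}^B\sum_{l=1}^{MT}R^{i,b}_l\Big],$$ where $\bar P^{\phi^i}$ is the distribution over batched long trajectories induced by the environment dynamics $\bar P_t$, the initial state distribution $\bar P_i$ and the policy with parameters $\phi^i$. Then $$\nabla_{\phi^i}\bar J(\phi^i)=\mathbb{E}_{\bar P^{\phi^i}}\Bigg[\sum_{b=1}^B\sum_{l=1}^{MT}\nabla_{\phi^i}\log\pi^i(a^{i,b}_l\mid h^{i,b}_l;\phi^i)\Big(\frac1B\sum_{l'=l}^{m_lT}R^{i,b}_{l'}+\frac1B\sum_{b'=1}^B\sum_{l'=m_lT+1}^{MT}R^{i,b'}_{l'}\Big)\Bigg],$$ where $m_l=\lceil l/T\rceil$ is the index of the inner episode containing long time step $l$.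
   Context: A partially observable stochastic game (POSG) is played between an ego agent $i$ and co-players $-i$, each with parameterized policies; rewards are bounded and all state, action, observation and reward spaces are finite. The batched co-player shaping POMDP (from the viewpoint of agent $i$) is defined as follows. There are $M$ consecutive inner episodes, each of $T$ time steps of the POSG, so the long time index runs over $l=1,\dots,MT$; inner episode $m\in\{1,\dots,M\}$ covers steps $(m-1)T+1,\dots,mT$. In every inner episode, $B$ copies (indexed by $b=1,\dots,B$) of the POSG are played in parallel, with the co-players using their current parameters $\phi^{-i}_m$. The hidden state consists of the $B$ environment states together with the co-players' current parameters. At each inner-episode boundary all $B$ environments are reset, and the co-players (naive learners) update their parameters by a fixed (possibly stochastic) learning rule whose input is the batch of the $B$ histories of the inner episode just completed; the initial state distribution $\bar P_i$ initializes the co-player parameters and the first batch of environments. Consequently, within an inner episode, the $B$ parallel trajectories evolve conditionally independently given the co-player parameters, and an action in trajectory $b$ can affect trajectory $b'\neq b$ only through the co-player parameter updates at subsequent inner-episode boundaries. The ego agent's long history $h^{i,b}_l$ in copy $b$ consists of all its observations (which may include past actions) from step $1$ up to step $l$, spanning across inner episodes. The ego agent's joint policy over the batched action $\bar a^i_l=\{a^{i,b}_l\}_{b=1}^B$ factorizes as $\bar\pi^i(\bar a^i_l\mid\bar h^i_l;\phi^i)=\prod_{b=1}^B\pi^i(a^{i,b}_l\mid h^{i,b}_l;\phi^i)$ with shared parameters $\phi^i$, and $\pi^i$ is differentiable in $\phi^i$. $R^{i,b}_l$ denotes agent $i$'s reward at long step $l$ in copy $b$. *)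

theory Defs
  imports "HOL-Analysis.Analysis" "HOL-Probability.Probability_Mass_Function"
begin

text \<open>
Batched co-player shaping POMDP, indices 0-based.
  B copies (b < B), M inner episodes (m < M), T steps per episode (t < T).
  Long step index l = m*T + t, with l < M*T; its inner episode is l div T.
A batched long trajectory is a triple (cs, ss, as):
  cs m        co-player parameters used in inner episode m           (m < M)
  ss b m t    environment state of copy b in episode m at step t     (t \<le> T; t = T is the
              state reached after the last step of the episode, before the reset)
  as b m t    ego action of copy b in episode m at step t            (t < T)
Model components:
  initC       initial distribution of co-player parameters
  reset c     distribution of a (re)set environment state, given co-player parameters c;
              each copy is reset independently at each inner-episode start
  K c s a     environment transition (co-players acting with parameters c; their
              within-episode information is part of the finite state s)
  U c D       co-player learning rule: new parameters from old parameters c and the batch D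
              of the B histories of the inner episode just completed
  obs s       ego observation of state s
  rew s a s'  ego reward
  pol p h     ego policy (distribution over ego actions) with parameters p given ego long history h
\<close>

type_synonym ('c,'s,'a) btraj =
  "(nat \<Rightarrow> 'c) \<times> (nat \<Rightarrow> nat \<Rightarrow> nat \<Rightarrow> 's) \<times> (nat \<Rightarrow> nat \<Rightarrow> nat \<Rightarrow> 'a)"

definition btrajs :: "nat \<Rightarrow> nat \<Rightarrow> nat \<Rightarrow> ('c,'s,'a) btraj set" where
  "btrajs B M T =
     (Pi\<^sub>E {..<M} (\<lambda>_. UNIV)) \<times>
     (Pi\<^sub>E {..<B} (\<lambda>_. Pi\<^sub>E {..<M} (\<lambda>_. Pi\<^sub>E {..T} (\<lambda>_. UNIV)))) \<times>
     (Pi\<^sub>E {..<B} (\<lambda>_. Pi\<^sub>E {..<M} (\<lambda>_. Pi\<^sub>E {..<T} (\<lambda>_. UNIV))))"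

definition ego_hist :: "nat \<Rightarrow> ('s \<Rightarrow> 'o) \<Rightarrow> (nat \<Rightarrow> nat \<Rightarrow> nat \<Rightarrow> 's) \<Rightarrow> nat \<Rightarrow> nat \<Rightarrow> 'o list" where
  "ego_hist T obs ss b l = map (\<lambda>k. obs (ss b (k div T) (k mod T))) [0..<Suc l]"

definition ego_act :: "nat \<Rightarrow> (nat \<Rightarrow> nat \<Rightarrow> nat \<Rightarrow> 'a) \<Rightarrow> nat \<Rightarrow> nat \<Rightarrow> 'a" where
  "ego_act T as b l = as b (l div T) (l mod T)"

definition long_rew :: "nat \<Rightarrow> ('s \<Rightarrow> 'a \<Rightarrow> 's \<Rightarrow> real) \<Rightarrow> (nat \<Rightarrow> nat \<Rightarrow> nat \<Rightarrow> 's)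
    \<Rightarrow> (nat \<Rightarrow> nat \<Rightarrow> nat \<Rightarrow> 'a) \<Rightarrow> nat \<Rightarrow> nat \<Rightarrow> real" where
  "long_rew T rew ss as b l =
     rew (ss b (l div T) (l mod T)) (as b (l div T) (l mod T)) (ss b (l div T) (Suc (l mod T)))"

definition batch_data :: "nat \<Rightarrow> nat \<Rightarrow> (nat \<Rightarrow> nat \<Rightarrow> nat \<Rightarrow> 's) \<Rightarrow> (nat \<Rightarrow> nat \<Rightarrow> nat \<Rightarrow> 'a)
    \<Rightarrow> nat \<Rightarrow> ('s list \<times> 'a list) list" where
  "batch_data B T ss as m = map (\<lambda>b. (map (ss b m) [0..<Suc T], map (as b m) [0..<T])) [0..<B]"

definition traj_prob ::
  "nat \<Rightarrow> nat \<Rightarrow> nat \<Rightarrow> 'c pmf \<Rightarrow> ('c \<Rightarrow> ('s list \<times> 'a list) list \<Rightarrow> 'c pmf) \<Rightarrow> ('c \<Rightarrow> 's pmf)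
   \<Rightarrow> ('c \<Rightarrow> 's \<Rightarrow> 'a \<Rightarrow> 's pmf) \<Rightarrow> ('s \<Rightarrow> 'o) \<Rightarrow> ('p \<Rightarrow> 'o list \<Rightarrow> 'a pmf) \<Rightarrow> 'p
   \<Rightarrow> ('c,'s,'a) btraj \<Rightarrow> real" where
  "traj_prob B M T initC U reset K obs pol p \<tau> = (case \<tau> of (cs, ss, as) \<Rightarrow>
     pmf initC (cs 0) *
     (\<Prod>m\<in>{1..<M}. pmf (U (cs (m - 1)) (batch_data B T ss as (m - 1))) (cs m)) *
     (\<Prod>b<B. \<Prod>m<M. pmf (reset (cs m)) (ss b m 0) *
        (\<Prod>t<T. pmf (pol p (ego_hist T obs ss b (m * T + t))) (as b m t) *
                 pmf (K (cs m) (ss b m t) (as b m t)) (ss b m (Suc t)))))"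

definition Jbar ::
  "nat \<Rightarrow> nat \<Rightarrow> nat \<Rightarrow> 'c pmf \<Rightarrow> ('c \<Rightarrow> ('s list \<times> 'a list) list \<Rightarrow> 'c pmf) \<Rightarrow> ('c \<Rightarrow> 's pmf)
   \<Rightarrow> ('c \<Rightarrow> 's \<Rightarrow> 'a \<Rightarrow> 's pmf) \<Rightarrow> ('s \<Rightarrow> 'o) \<Rightarrow> ('s \<Rightarrow> 'a \<Rightarrow> 's \<Rightarrow> real)
   \<Rightarrow> ('p \<Rightarrow> 'o list \<Rightarrow> 'a pmf) \<Rightarrow> 'p \<Rightarrow> real" where
  "Jbar B M T initC U reset K obs rew pol p =
     (\<Sum>\<tau>\<in>btrajs B M T. traj_prob B M T initC U reset K obs pol p \<tau> *
        (case \<tau> of (cs, ss, as) \<Rightarrow>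
           (1 / real B) * (\<Sum>b<B. \<Sum>l<M * T. long_rew T rew ss as b l)))"

end

theory Submission
  imports Defs "HOL-Library.List_Lexorder"
begin

text \<open>A batched trajectory is an assignment to the variables of a Bayesian network: co-player
  parameters, environment states and ego actions. Its probability is the product of one conditional
  factor per variable, and only the ego-action factors depend on \<open>\<phi>\<close>, so differentiating
  gives the likelihood-ratio sum of \<open>\<nabla>\<pi>/\<pi>\<close> times the batch return. Fix the action of copy
  \<open>b\<close> at step \<open>l\<close> and order the variables causally, with all other copies of an inner episode
  placed before copy \<open>b\<close>. A reward that is not downstream of the action (earlier in copy \<open>b\<close>, or
  in another copy before the next co-player update) depends only on variables ranked before the
  action. Summing out the later variables (each factor sums to one) and then the action itself,
  the score sums to zero, so such rewards drop out of the gradient.\<close>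

section \<open>Sums over finite product spaces\<close>

lemma sum_PiE_insert:
  assumes "k \<notin> S"
  shows "(\<Sum>x\<in>Pi\<^sub>E (insert k S) D. G x) = (\<Sum>x\<in>Pi\<^sub>E S D. \<Sum>w\<in>D k. G (x(k:=w)))"
proof -
  have "(\<Sum>x\<in>Pi\<^sub>E (insert k S) D. G x) = (\<Sum>p\<in>D k \<times> Pi\<^sub>E S D. G ((\<lambda>(w, x). x(k:=w)) p))"
    unfolding PiE_insert_eq by (rule sum.reindex[OF inj_combinator[OF assms], unfolded comp_def])
  also have "\<dots> = (\<Sum>w\<in>D k. \<Sum>x\<in>Pi\<^sub>E S D. G (x(k:=w)))"
    by (simp add: sum.cartesian_product split_def)
  also have "\<dots> = (\<Sum>x\<in>Pi\<^sub>E S D. \<Sum>w\<in>D k. G (x(k:=w)))"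
    by (rule sum.swap)
  finally show ?thesis .
qed

text \<open>Summing out the variable of highest rank first: only its own factor depends on it, and
  that factor sums to one.\<close>

lemma sum_PiE_marginalize:
  fixes r :: "'v \<Rightarrow> 'r::linorder"
  assumes "finite F" and "A \<inter> F = {}" and "inj_on r F"
    and G_indep: "\<And>x v w. v \<in> F \<Longrightarrow> G (x(v:=w)) = G x"
    and causal: "\<And>x u v w. u \<in> F \<Longrightarrow> v \<in> F \<Longrightarrow> r u < r v \<Longrightarrow> f u (x(v:=w)) = f u x"
    and normalized: "\<And>x v. v \<in> F \<Longrightarrow> (\<Sum>w\<in>D v. f v (x(v:=w))) = (1::real)"
  shows "(\<Sum>x\<in>Pi\<^sub>E (A \<union> F) D. G x * (\<Prod>v\<in>F. f v x)) = (\<Sum>x\<in>Pi\<^sub>E A D. G x)"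
proof -
  have "S \<subseteq> F \<Longrightarrow> (\<Sum>x\<in>Pi\<^sub>E (A \<union> S) D. G x * (\<Prod>v\<in>S. f v x)) = (\<Sum>x\<in>Pi\<^sub>E A D. G x)"
    if "finite S" for S
    using that
  proof (induction S rule: finite_ranking_induct[where f = r])
    case empty
    then show ?case by simp
  next
    case (insert k S)
    show ?case
    proof (cases "k \<in> S")
      case True
      with insert show ?thesis by (simp add: insert_absorb)
    next
      case False
      have kF: "k \<in> F" and SF: "S \<subseteq> F" using insert.prems by auto
      have "k \<notin> A \<union> S" using assms(2) kF False by auto
      have below: "r u < r k" if "u \<in> S" for u
        using insert.hyps(2)[OF that] assms(3) kF SF that False
        by (metis inj_onD order_le_less subsetD)
      have "(\<Sum>x\<in>Pi\<^sub>E (A \<union> insert k S) D. G x * (\<Prod>v\<in>insert k S. f v x))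
          = (\<Sum>x\<in>Pi\<^sub>E (A \<union> S) D. \<Sum>w\<in>D k. G (x(k:=w)) * (\<Prod>v\<in>insert k S. f v (x(k:=w))))"
        using sum_PiE_insert[OF \<open>k \<notin> A \<union> S\<close>] by simp
      also have "\<dots> = (\<Sum>x\<in>Pi\<^sub>E (A \<union> S) D. G x * (\<Prod>v\<in>S. f v x) * (\<Sum>w\<in>D k. f k (x(k:=w))))"
      proof (rule sum.cong[OF refl])
        fix x
        have "(\<Prod>v\<in>S. f v (x(k:=w))) = (\<Prod>v\<in>S. f v x)" for w
          using causal below kF SF by (intro prod.cong) auto
        then show "(\<Sum>w\<in>D k. G (x(k:=w)) * (\<Prod>v\<in>insert k S. f v (x(k:=w))))
            = G x * (\<Prod>v\<in>S. f v x) * (\<Sum>w\<in>D k. f k (x(k:=w)))"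
          using G_indep[OF kF] insert.hyps(1) False by (simp add: sum_distrib_left mult_ac)
      qed
      also have "\<dots> = (\<Sum>x\<in>Pi\<^sub>E A D. G x)"
        using normalized[OF kF] insert.IH SF by simp
      finally show ?thesis .
    qed
  qed
  then show ?thesis using assms(1) by simp
qed

text \<open>After marginalizing the variables ranked after \<open>k\<close>, the sum over \<open>k\<close> factors out of \<open>g\<close>
  and the earlier factors, and \<open>h\<close> sums to zero over \<open>k\<close>.\<close>

lemma sum_PiE_score_zero:
  fixes r :: "'v \<Rightarrow> 'r::linorder"
  assumes "finite V" and "k \<in> V" and "inj_on r V"
    and causal: "\<And>x u v w. u \<in> V \<Longrightarrow> v \<in> V \<Longrightarrow> r u < r v \<Longrightarrow> f u (x(v:=w)) = f u x"
    and normalized: "\<And>x v. v \<in> V \<Longrightarrow> r k < r v \<Longrightarrow> (\<Sum>w\<in>D v. f v (x(v:=w))) = (1::real)"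
    and g_before: "\<And>x v w. v \<in> V \<Longrightarrow> r k \<le> r v \<Longrightarrow> g (x(v:=w)) = g x"
    and h_upto: "\<And>x v w. v \<in> V \<Longrightarrow> r k < r v \<Longrightarrow> h (x(v:=w)) = h x"
    and h_sum: "\<And>x. (\<Sum>w\<in>D k. h (x(k:=w))) = 0"
  shows "(\<Sum>x\<in>Pi\<^sub>E V D. g x * h x * (\<Prod>v\<in>V-{k}. f v x)) = 0"
proof -
  define P where "P = {v\<in>V. r v < r k}"
  define F where "F = {v\<in>V. r k < r v}"
  have "r v \<noteq> r k" if "v \<in> V" "v \<noteq> k" for v
    using assms(2,3) that by (auto dest: inj_onD)
  then have V: "V = insert k P \<union> F" and V_k: "V - {k} = P \<union> F"
    using assms(2) unfolding P_def F_def by (auto simp: neq_iff)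
  have "k \<notin> P" "P \<inter> F = {}" "insert k P \<inter> F = {}" "finite P" "finite F"
    using assms(1) unfolding P_def F_def by auto
  then have "(\<Sum>x\<in>Pi\<^sub>E V D. g x * h x * (\<Prod>v\<in>V-{k}. f v x))
      = (\<Sum>x\<in>Pi\<^sub>E (insert k P \<union> F) D. (g x * h x * (\<Prod>v\<in>P. f v x)) * (\<Prod>v\<in>F. f v x))"
    unfolding V_k by (subst V) (simp add: prod.union_disjoint mult_ac)
  also have "\<dots> = (\<Sum>x\<in>Pi\<^sub>E (insert k P) D. g x * h x * (\<Prod>v\<in>P. f v x))"
    using \<open>finite F\<close> \<open>insert k P \<inter> F = {}\<close>
  proof (rule sum_PiE_marginalize[where r = r])
    show "inj_on r F" using assms(3) unfolding F_def by (auto intro: inj_on_subset)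
    show "g (x(v:=w)) * h (x(v:=w)) * (\<Prod>u\<in>P. f u (x(v:=w))) = g x * h x * (\<Prod>u\<in>P. f u x)"
      if "v \<in> F" for x v w
      using that g_before h_upto causal unfolding F_def P_def by (auto intro!: prod.cong)
  qed (use causal normalized in \<open>auto simp: F_def\<close>)
  also have "\<dots> = (\<Sum>x\<in>Pi\<^sub>E P D. \<Sum>w\<in>D k. g (x(k:=w)) * h (x(k:=w)) * (\<Prod>v\<in>P. f v (x(k:=w))))"
    using \<open>k \<notin> P\<close> by (rule sum_PiE_insert)
  also have "\<dots> = (\<Sum>x\<in>Pi\<^sub>E P D. g x * (\<Prod>v\<in>P. f v x) * (\<Sum>w\<in>D k. h (x(k:=w))))"
  proof (rule sum.cong[OF refl])
    fix x
    have "(\<Sum>w\<in>D k. g (x(k:=w)) * h (x(k:=w)) * (\<Prod>v\<in>P. f v (x(k:=w))))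
        = (\<Sum>w\<in>D k. g x * (\<Prod>v\<in>P. f v x) * h (x(k:=w)))"
      using g_before[OF assms(2)] causal assms(2) unfolding P_def
      by (intro sum.cong refl) (auto intro!: prod.cong)
    then show "(\<Sum>w\<in>D k. g (x(k:=w)) * h (x(k:=w)) * (\<Prod>v\<in>P. f v (x(k:=w))))
        = g x * (\<Prod>v\<in>P. f v x) * (\<Sum>w\<in>D k. h (x(k:=w)))"
      by (simp add: sum_distrib_left)
  qed
  also have "\<dots> = 0" using h_sum by simp
  finally show ?thesis .
qed

lemma has_derivative_pmf_sum_zero:
  fixes P :: "'p::real_normed_vector \<Rightarrow> 'a::finite pmf"
  assumes "\<And>a. ((\<lambda>y. pmf (P y) a) has_derivative D a) (at x)"
  shows "(\<Sum>a\<in>UNIV. D a d) = 0"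
proof -
  have "((\<lambda>y. \<Sum>a\<in>UNIV. pmf (P y) a) has_derivative (\<lambda>d. \<Sum>a\<in>UNIV. D a d)) (at x)"
    by (intro has_derivative_sum assms)
  moreover have "(\<lambda>y. \<Sum>a\<in>UNIV. pmf (P y) a) = (\<lambda>y. 1)"
    by (simp add: sum_pmf_eq_1)
  ultimately have "((\<lambda>y. 1::real) has_derivative (\<lambda>d. \<Sum>a\<in>UNIV. D a d)) (at x)"
    by simp
  from has_derivative_unique[OF this has_derivative_const] show ?thesis
    by metis
qed

text \<open>A zero of a nonnegative function is a local minimum.\<close>

lemma has_derivative_pmf_at_zero:
  fixes P :: "'p::real_normed_vector \<Rightarrow> 'a pmf"
  assumes "((\<lambda>y. pmf (P y) a) has_derivative D) (at x)" and "pmf (P x) a = 0"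
  shows "D = (\<lambda>_. 0)"
  using assms by (intro has_derivative_local_min) (auto simp: always_eventually)

section \<open>Long time indices\<close>

lemma same_div_mod_le_iff:
  fixes k l T :: nat
  assumes "k div T = l div T"
  shows "k mod T \<le> l mod T \<longleftrightarrow> k \<le> l" and "k mod T < l mod T \<longleftrightarrow> k < l"
proof -
  have "k div T * T = l div T * T"
    using assms by simp
  with div_mult_mod_eq[of k T] div_mult_mod_eq[of l T]
  show "k mod T \<le> l mod T \<longleftrightarrow> k \<le> l" and "k mod T < l mod T \<longleftrightarrow> k < l"
    by linarith+
qed

lemma index_in_episode_less:
  fixes m t M T :: nat
  assumes "m < M" and "t < T"
  shows "m * T + t < M * T"
proof -
  have "m * T + t < Suc m * T"
    using assms(2) by simp
  also have "\<dots> \<le> M * T"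
    using assms(1) by (intro mult_le_mono1) simp
  finally show ?thesis .
qed

text \<open>The rewards that the action of copy \<open>b\<close> at step \<open>l\<close> can influence: the rest of its
  inner episode in copy \<open>b\<close> and, through the next co-player update, every later step of every
  copy.\<close>

definition downstream :: "nat \<Rightarrow> nat \<Rightarrow> nat \<Rightarrow> nat \<Rightarrow> nat \<Rightarrow> bool" where
  "downstream T b l b' l' \<longleftrightarrow>
     (b' = b \<and> l \<le> l' \<and> l' < (l div T + 1) * T) \<or> (l div T + 1) * T \<le> l'"

lemma sum_downstream:
  fixes R :: "nat \<Rightarrow> nat \<Rightarrow> 'r::comm_monoid_add"
  assumes "b < B" and "l < M * T"
  shows "(\<Sum>b'<B. \<Sum>l'<M * T. if downstream T b l b' l' then R b' l' else 0)
    = (\<Sum>l'\<in>{l..<(l div T + 1) * T}. R b l') + (\<Sum>b'<B. \<Sum>l'\<in>{(l div T + 1) * T..<M * T}. R b' l')"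
proof -
  define E where "E = (l div T + 1) * T"
  have "E \<le> M * T"
    using less_mult_imp_div_less[OF assms(2)] unfolding E_def by (intro mult_le_mono1) simp
  have "(\<Sum>b'<B. \<Sum>l'<M * T. if downstream T b l b' l' then R b' l' else 0)
      = (\<Sum>b'<B. \<Sum>l'<M * T. if b' = b then (if l' \<in> {l..<E} then R b l' else 0) else 0)
        + (\<Sum>b'<B. \<Sum>l'<M * T. if l' \<in> {E..<M * T} then R b' l' else 0)"
    unfolding sum.distrib[symmetric] by (intro sum.cong refl) (auto simp: downstream_def E_def)
  also have "(\<Sum>b'<B. \<Sum>l'<M * T. if b' = b then (if l' \<in> {l..<E} then R b l' else 0) else 0)
      = (\<Sum>l'<M * T. if l' \<in> {l..<E} then R b l' else 0)"
    using assms(1) by (subst sum.swap) simp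
  also have "\<dots> = (\<Sum>l'\<in>{l'\<in>{..<M * T}. l' \<in> {l..<E}}. R b l')"
    by (rule sum.inter_filter[symmetric]) simp
  also have "{l'\<in>{..<M * T}. l' \<in> {l..<E}} = {l..<E}"
    using \<open>E \<le> M * T\<close> by auto
  also have "(\<Sum>b'<B. \<Sum>l'<M * T. if l' \<in> {E..<M * T} then R b' l' else 0)
      = (\<Sum>b'<B. \<Sum>l'\<in>{l'\<in>{..<M * T}. l' \<in> {E..<M * T}}. R b' l')"
    by (simp only: sum.inter_filter finite_lessThan)
  also have "{l'\<in>{..<M * T}. l' \<in> {E..<M * T}} = {E..<M * T}"
    by auto
  finally show ?thesis
    unfolding E_def .
qed

section \<open>Batched trajectories as variable assignments\<close>

text \<open>An assignment takes values in
  \<open>'c + 's + 'a\<close>, the summand being fixed by \<open>var_dom\<close>.\<close>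

datatype traj_var = Coplayer nat | State nat nat nat | Action nat nat nat

fun var_dom :: "traj_var \<Rightarrow> ('c + 's + 'a) set" where
  "var_dom (Coplayer m) = range Inl"
| "var_dom (State b m t) = range (Inr \<circ> Inl)"
| "var_dom (Action b m t) = range (Inr \<circ> Inr)"

lemma sum_var_dom:
  "(\<Sum>w\<in>var_dom (Coplayer m). f w) = (\<Sum>c\<in>UNIV. f (Inl c))"
  "(\<Sum>w\<in>var_dom (State b m t). f w) = (\<Sum>s\<in>UNIV. f (Inr (Inl s)))"
  "(\<Sum>w\<in>var_dom (Action b m t). f w) = (\<Sum>a\<in>UNIV. f (Inr (Inr a)))"
  by (simp_all add: sum.reindex inj_on_def)

locale batched_shaping =
  fixes B M T :: nat
    and initC :: "'c::finite pmf"
    and U :: "'c \<Rightarrow> ('s::finite list \<times> 'a::finite list) list \<Rightarrow> 'c pmf"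
    and reset :: "'c \<Rightarrow> 's pmf"
    and K :: "'c \<Rightarrow> 's \<Rightarrow> 'a \<Rightarrow> 's pmf"
    and obs :: "'s \<Rightarrow> 'o"
    and rew :: "'s \<Rightarrow> 'a \<Rightarrow> 's \<Rightarrow> real"
    and pol :: "'p::real_normed_vector \<Rightarrow> 'o list \<Rightarrow> 'a pmf"
  assumes M_pos: "0 < M" and T_pos: "0 < T"
begin

definition vars :: "traj_var set" where
  "vars = Coplayer ` {..<M} \<union> (\<lambda>(b, m, t). State b m t) ` ({..<B} \<times> {..<M} \<times> {..T})
     \<union> (\<lambda>(b, m, t). Action b m t) ` ({..<B} \<times> {..<M} \<times> {..<T})"

lemma mem_vars_iff [simp]:
  "Coplayer m \<in> vars \<longleftrightarrow> m < M"
  "State b m t \<in> vars \<longleftrightarrow> b < B \<and> m < M \<and> t \<le> T"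
  "Action b m t \<in> vars \<longleftrightarrow> b < B \<and> m < M \<and> t < T"
  by (auto simp: vars_def image_iff)

lemma finite_vars [simp]: "finite vars"
  by (simp add: vars_def)

text \<open>The accessors are restricted to the index ranges so that \<open>decode\<close> lands in the
  extensional space \<open>btrajs\<close>.\<close>

definition cs_of :: "(traj_var \<Rightarrow> 'c + 's + 'a) \<Rightarrow> nat \<Rightarrow> 'c" where
  "cs_of x = (\<lambda>m\<in>{..<M}. projl (x (Coplayer m)))"

definition ss_of :: "(traj_var \<Rightarrow> 'c + 's + 'a) \<Rightarrow> nat \<Rightarrow> nat \<Rightarrow> nat \<Rightarrow> 's" where
  "ss_of x = (\<lambda>b\<in>{..<B}. \<lambda>m\<in>{..<M}. \<lambda>t\<in>{..T}. projl (projr (x (State b m t))))"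

definition as_of :: "(traj_var \<Rightarrow> 'c + 's + 'a) \<Rightarrow> nat \<Rightarrow> nat \<Rightarrow> nat \<Rightarrow> 'a" where
  "as_of x = (\<lambda>b\<in>{..<B}. \<lambda>m\<in>{..<M}. \<lambda>t\<in>{..<T}. projr (projr (x (Action b m t))))"

definition decode :: "(traj_var \<Rightarrow> 'c + 's + 'a) \<Rightarrow> ('c, 's, 'a) btraj" where
  "decode x = (cs_of x, ss_of x, as_of x)"

fun encode :: "('c, 's, 'a) btraj \<Rightarrow> traj_var \<Rightarrow> 'c + 's + 'a" where
  "encode (cs, ss, as) v = (if v \<in> vars then
     (case v of Coplayer m \<Rightarrow> Inl (cs m) | State b m t \<Rightarrow> Inr (Inl (ss b m t))
        | Action b m t \<Rightarrow> Inr (Inr (as b m t)))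
     else undefined)"

lemma decode_in_btrajs: "decode x \<in> btrajs B M T"
  by (auto simp: decode_def btrajs_def cs_of_def ss_of_def as_of_def)

lemma encode_in_PiE: "encode \<tau> \<in> Pi\<^sub>E vars var_dom"
proof -
  have "encode \<tau> v \<in> var_dom v" if "v \<in> vars" for v
    using that by (cases \<tau>; cases v) auto
  then show ?thesis
    by (cases \<tau>) (auto simp: PiE_def extensional_def)
qed

lemma decode_encode:
  assumes "\<tau> \<in> btrajs B M T"
  shows "decode (encode \<tau>) = \<tau>"
proof -
  obtain cs ss as where \<tau>: "\<tau> = (cs, ss, as)"
    by (cases \<tau>)
  from assms show ?thesis
    unfolding \<tau> by (auto simp: decode_def btrajs_def cs_of_def ss_of_def as_of_def
        PiE_iff extensional_def fun_eq_iff)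
qed

lemma encode_decode:
  assumes "x \<in> Pi\<^sub>E vars var_dom"
  shows "encode (decode x) = x"
proof
  fix v
  show "encode (decode x) v = x v"
  proof (cases "v \<in> vars")
    case True
    with assms have "x v \<in> var_dom v"
      by auto
    with True show ?thesis
      by (cases v) (auto simp: decode_def cs_of_def ss_of_def as_of_def)
  next
    case False
    with assms show ?thesis
      by (auto simp: decode_def)
  qed
qed

lemma sum_btrajs_decode:
  "(\<Sum>\<tau>\<in>btrajs B M T. F \<tau>) = (\<Sum>x\<in>Pi\<^sub>E vars var_dom. F (decode x))"
  by (rule sum.reindex_bij_witness[where i = decode and j = encode])
    (auto simp: decode_encode encode_decode encode_in_PiE decode_in_btrajs)

fun factor :: "'p \<Rightarrow> traj_var \<Rightarrow> (traj_var \<Rightarrow> 'c + 's + 'a) \<Rightarrow> real" where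
  "factor p (Coplayer m) x =
     (if m = 0 then pmf initC (cs_of x 0)
      else pmf (U (cs_of x (m - 1)) (batch_data B T (ss_of x) (as_of x) (m - 1))) (cs_of x m))"
| "factor p (State b m t) x =
     (if t = 0 then pmf (reset (cs_of x m)) (ss_of x b m 0)
      else pmf (K (cs_of x m) (ss_of x b m (t - 1)) (as_of x b m (t - 1))) (ss_of x b m t))"
| "factor p (Action b m t) x = pmf (pol p (ego_hist T obs (ss_of x) b (m * T + t))) (as_of x b m t)"

lemma traj_prob_decode:
  "traj_prob B M T initC U reset K obs pol p (decode x) = (\<Prod>v\<in>vars. factor p v x)"
proof -
  let ?C = "Coplayer ` {..<M}"
  let ?S = "(\<lambda>(b, m, t). State b m t) ` ({..<B} \<times> {..<M} \<times> {..T})"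
  let ?A = "(\<lambda>(b, m, t). Action b m t) ` ({..<B} \<times> {..<M} \<times> {..<T})"
  have "(\<Prod>v\<in>vars. factor p v x) = (\<Prod>v\<in>?C \<union> ?S. factor p v x) * (\<Prod>v\<in>?A. factor p v x)"
    unfolding vars_def by (rule prod.union_disjoint) auto
  also have "(\<Prod>v\<in>?C \<union> ?S. factor p v x) = (\<Prod>v\<in>?C. factor p v x) * (\<Prod>v\<in>?S. factor p v x)"
    by (rule prod.union_disjoint) auto
  finally have "(\<Prod>v\<in>vars. factor p v x)
      = (\<Prod>v\<in>?C. factor p v x) * (\<Prod>v\<in>?S. factor p v x) * (\<Prod>v\<in>?A. factor p v x)" .
  moreover have "(\<Prod>v\<in>?C. factor p v x) = pmf initC (cs_of x 0) *
      (\<Prod>m\<in>{1..<M}. pmf (U (cs_of x (m - 1)) (batch_data B T (ss_of x) (as_of x) (m - 1))) (cs_of x m))"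
  proof -
    have "(\<Prod>v\<in>?C. factor p v x) = (\<Prod>m<M. factor p (Coplayer m) x)"
      by (subst prod.reindex) (auto simp: inj_on_def)
    also have "\<dots> = factor p (Coplayer 0) x * (\<Prod>m\<in>{1..<M}. factor p (Coplayer m) x)"
      using M_pos by (simp add: lessThan_atLeast0 prod.atLeast_Suc_lessThan)
    finally show ?thesis
      by simp
  qed
  moreover have "(\<Prod>v\<in>?S. factor p v x) = (\<Prod>b<B. \<Prod>m<M. pmf (reset (cs_of x m)) (ss_of x b m 0) *
      (\<Prod>t<T. pmf (K (cs_of x m) (ss_of x b m t) (as_of x b m t)) (ss_of x b m (Suc t))))"
  proof -
    have "(\<Prod>v\<in>?S. factor p v x) = (\<Prod>b<B. \<Prod>m<M. \<Prod>t\<le>T. factor p (State b m t) x)"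
      by (subst prod.reindex) (auto simp: inj_on_def prod.cartesian_product split_def)
    then show ?thesis
      by (simp add: prod.atMost_shift)
  qed
  moreover have "(\<Prod>v\<in>?A. factor p v x) = (\<Prod>b<B. \<Prod>m<M. \<Prod>t<T.
      pmf (pol p (ego_hist T obs (ss_of x) b (m * T + t))) (as_of x b m t))"
    by (subst prod.reindex) (auto simp: inj_on_def prod.cartesian_product split_def)
  ultimately show ?thesis
    by (simp add: traj_prob_def decode_def prod.distrib mult_ac)
qed

lemma factor_normalized:
  assumes "v \<in> vars"
  shows "(\<Sum>w\<in>var_dom v. factor p v (x(v:=w))) = 1"
proof (cases v)
  case (Coplayer m)
  with assms have "m - 1 < M" and "m \<noteq> 0 \<Longrightarrow> m - 1 \<noteq> m"
    by auto
  with assms show ?thesis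
    unfolding Coplayer sum_var_dom factor.simps
    by (cases "m = 0") (simp_all add: cs_of_def ss_of_def as_of_def sum_pmf_eq_1)
next
  case (State b m t)
  with assms have "t \<noteq> 0 \<Longrightarrow> t - 1 < T \<and> t - 1 \<noteq> t"
    by auto
  with assms State show ?thesis
    unfolding State sum_var_dom factor.simps
    by (cases "t = 0") (simp_all add: cs_of_def ss_of_def as_of_def sum_pmf_eq_1)
next
  case (Action b m t)
  with assms show ?thesis
    unfolding Action sum_var_dom factor.simps
    by (simp add: ss_of_def as_of_def sum_pmf_eq_1)
qed

text \<open>A causal order of the variables for the action of copy \<open>b0\<close>. Within an inner episode,
  every other copy is ranked before \<open>b0\<close>: given the co-player parameters the copies are
  independent, and they only interact through the next co-player update.\<close>

fun rank :: "nat \<Rightarrow> traj_var \<Rightarrow> nat list" where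
  "rank b0 (Coplayer m) = [m]"
| "rank b0 (State b m t) = [m, if b = b0 then B else b, 2 * t]"
| "rank b0 (Action b m t) = [m, if b = b0 then B else b, 2 * t + 1]"

lemma inj_on_rank: "inj_on (rank b0) vars"
proof (rule inj_onI)
  fix u v
  assume "u \<in> vars" "v \<in> vars" "rank b0 u = rank b0 v"
  moreover have "2 * i \<noteq> Suc (2 * j)" for i j :: nat
    by presburger
  ultimately show "u = v"
    by (cases u; cases v) (auto split: if_splits dest: sym)
qed

lemma rank_history_before_action:
  assumes "k \<le> l"
  shows "rank b0 (State b (k div T) (k mod T)) < rank b0 (Action b (l div T) (l mod T))"
  using div_le_mono[OF assms, of T] same_div_mod_le_iff(1)[of k T l] assms
  by (auto simp: order_le_less)

lemma cs_of_cong: "x (Coplayer m) = y (Coplayer m) \<Longrightarrow> cs_of x m = cs_of y m"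
  by (simp add: cs_of_def)

lemma ss_of_cong: "x (State b m t) = y (State b m t) \<Longrightarrow> ss_of x b m t = ss_of y b m t"
  by (simp add: ss_of_def)

lemma as_of_cong: "x (Action b m t) = y (Action b m t) \<Longrightarrow> as_of x b m t = as_of y b m t"
  by (simp add: as_of_def)

lemma batch_data_cong:
  assumes "\<And>b t. x (State b m t) = y (State b m t)" and "\<And>b t. x (Action b m t) = y (Action b m t)"
  shows "batch_data B T (ss_of x) (as_of x) m = batch_data B T (ss_of y) (as_of y) m"
  using assms by (auto simp: batch_data_def intro!: map_cong ss_of_cong as_of_cong)

lemma ego_hist_cong:
  assumes "\<And>k. k \<le> l \<Longrightarrow> x (State b (k div T) (k mod T)) = y (State b (k div T) (k mod T))"
  shows "ego_hist T obs (ss_of x) b l = ego_hist T obs (ss_of y) b l"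
  unfolding ego_hist_def using assms
  by (intro map_cong refl arg_cong[where f = obs] ss_of_cong) auto

lemma factor_fun_upd_later:
  assumes "u \<in> vars" and "rank b0 u < rank b0 v"
  shows "factor p u (x(v:=w)) = factor p u x"
proof -
  have agree: "(x(v:=w)) z = x z" if "rank b0 z \<le> rank b0 u" for z
    using that assms(2) by auto
  show ?thesis
  proof (cases u)
    case (Coplayer m)
    then show ?thesis
      using agree
      by (auto intro!: arg_cong2[where f = pmf] arg_cong2[where f = U] cs_of_cong batch_data_cong)
  next
    case (State b m t)
    then have "rank b0 (Action b m (t - 1)) < rank b0 u" if "t \<noteq> 0"
      using that by simp
    with State show ?thesis
      using agree by (auto intro!: arg_cong2[where f = pmf] arg_cong[where f = reset]
          arg_cong3[where f = K] cs_of_cong ss_of_cong as_of_cong)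
  next
    case (Action b m t)
    then have "t < T"
      using assms(1) by simp
    have "(x(v:=w)) (State b (k div T) (k mod T)) = x (State b (k div T) (k mod T))"
      if "k \<le> m * T + t" for k
    proof (rule agree, rule less_imp_le)
      show "rank b0 (State b (k div T) (k mod T)) < rank b0 u"
        using rank_history_before_action[OF that, of b0 b] Action \<open>t < T\<close> by simp
    qed
    with Action show ?thesis
      using agree by (auto intro!: arg_cong2[where f = pmf] arg_cong[where f = "pol p"]
          ego_hist_cong as_of_cong)
  qed
qed

section \<open>The policy gradient\<close>

definition batch_return :: "(nat \<Rightarrow> nat \<Rightarrow> nat \<Rightarrow> 's) \<Rightarrow> (nat \<Rightarrow> nat \<Rightarrow> nat \<Rightarrow> 'a) \<Rightarrow> real" where
  "batch_return ss as = (1 / real B) * (\<Sum>b<B. \<Sum>l<M * T. long_rew T rew ss as b l)"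

definition reward_to_go ::
    "(nat \<Rightarrow> nat \<Rightarrow> nat \<Rightarrow> 's) \<Rightarrow> (nat \<Rightarrow> nat \<Rightarrow> nat \<Rightarrow> 'a) \<Rightarrow> nat \<Rightarrow> nat \<Rightarrow> real" where
  "reward_to_go ss as b l =
     (1 / real B) * (\<Sum>l'\<in>{l..<(l div T + 1) * T}. long_rew T rew ss as b l')
   + (1 / real B) * (\<Sum>b'<B. \<Sum>l'\<in>{(l div T + 1) * T..<M * T}. long_rew T rew ss as b' l')"

definition nondownstream_return ::
    "(nat \<Rightarrow> nat \<Rightarrow> nat \<Rightarrow> 's) \<Rightarrow> (nat \<Rightarrow> nat \<Rightarrow> nat \<Rightarrow> 'a) \<Rightarrow> nat \<Rightarrow> nat \<Rightarrow> real" where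
  "nondownstream_return ss as b l = (1 / real B) *
     (\<Sum>b'<B. \<Sum>l'<M * T. if downstream T b l b' l' then 0 else long_rew T rew ss as b' l')"

lemma batch_return_split:
  assumes "b < B" and "l < M * T"
  shows "batch_return ss as = reward_to_go ss as b l + nondownstream_return ss as b l"
proof -
  let ?R = "long_rew T rew ss as"
  have "(\<Sum>b'<B. \<Sum>l'<M * T. ?R b' l')
      = (\<Sum>b'<B. \<Sum>l'<M * T. if downstream T b l b' l' then ?R b' l' else 0)
        + (\<Sum>b'<B. \<Sum>l'<M * T. if downstream T b l b' l' then 0 else ?R b' l')"
    unfolding sum.distrib[symmetric] by (intro sum.cong refl) simp
  then show ?thesis
    unfolding batch_return_def reward_to_go_def nondownstream_return_def sum_downstream[OF assms]
    by (simp add: algebra_simps)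
qed

lemma Jbar_eq_sum_factors:
  "Jbar B M T initC U reset K obs rew pol p
     = (\<Sum>x\<in>Pi\<^sub>E vars var_dom. (\<Prod>v\<in>vars. factor p v x) * batch_return (ss_of x) (as_of x))"
  unfolding Jbar_def sum_btrajs_decode
  by (simp add: traj_prob_decode[symmetric] decode_def batch_return_def)

definition action_at :: "nat \<Rightarrow> nat \<Rightarrow> traj_var" where
  "action_at b l = Action b (l div T) (l mod T)"

lemma action_at_eq_iff: "action_at b l = action_at b' l' \<longleftrightarrow> b = b' \<and> l = l'"
  unfolding action_at_def by (metis traj_var.inject(3) div_mult_mod_eq)

lemma Action_eq_action_at: "t < T \<Longrightarrow> Action b m t = action_at b (m * T + t)"
  by (simp add: action_at_def)

lemma action_at_in_vars: "b < B \<Longrightarrow> l < M * T \<Longrightarrow> action_at b l \<in> vars"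
  using less_mult_imp_div_less[of l M T] T_pos by (simp add: action_at_def)

lemma factor_action_at:
  "factor p (action_at b l) x = pmf (pol p (ego_hist T obs (ss_of x) b l)) (ego_act T (as_of x) b l)"
  by (simp add: action_at_def ego_act_def)

lemma long_rew_cong:
  assumes "x (State b (l div T) (l mod T)) = y (State b (l div T) (l mod T))"
    and "x (State b (l div T) (Suc (l mod T))) = y (State b (l div T) (Suc (l mod T)))"
    and "x (Action b (l div T) (l mod T)) = y (Action b (l div T) (l mod T))"
  shows "long_rew T rew (ss_of x) (as_of x) b l = long_rew T rew (ss_of y) (as_of y) b l"
  using assms by (simp add: long_rew_def ss_of_def as_of_def)

lemma rank_reward_before_action:
  assumes "b' < B" and "\<not> downstream T b l b' l'"
  shows "rank b (State b' (l' div T) (l' mod T)) < rank b (action_at b l)"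
    and "rank b (State b' (l' div T) (Suc (l' mod T))) < rank b (action_at b l)"
    and "rank b (Action b' (l' div T) (l' mod T)) < rank b (action_at b l)"
proof -
  have "l' < (l div T + 1) * T"
    using assms(2) unfolding downstream_def by (simp only: de_Morgan_disj not_le)
  then have "l' div T \<le> l div T"
    using less_mult_imp_div_less[of l' "l div T + 1" T] by simp
  moreover have "l' < l" if "b' = b"
    using assms(2) that unfolding downstream_def by (simp only: de_Morgan_disj not_le) linarith
  ultimately consider "l' div T < l div T"
    | "l' div T = l div T" "b' = b" "l' mod T < l mod T"
    | "l' div T = l div T" "b' \<noteq> b"
    using same_div_mod_le_iff(2)[of l' T l] by fastforce
  note cases = this
  show "rank b (State b' (l' div T) (l' mod T)) < rank b (action_at b l)"
    using cases by cases (simp_all add: action_at_def assms(1))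
  show "rank b (State b' (l' div T) (Suc (l' mod T))) < rank b (action_at b l)"
    using cases by cases (simp_all add: action_at_def assms(1))
  show "rank b (Action b' (l' div T) (l' mod T)) < rank b (action_at b l)"
    using cases by cases (simp_all add: action_at_def assms(1))
qed

context
  fixes Dpol :: "'p \<Rightarrow> 'o list \<Rightarrow> 'a \<Rightarrow> 'p \<Rightarrow> real" and \<phi> :: 'p
  assumes pol_deriv: "\<And>y h a. ((\<lambda>p. pmf (pol p h) a) has_derivative Dpol y h a) (at y)"
begin

fun factor_deriv :: "traj_var \<Rightarrow> (traj_var \<Rightarrow> 'c + 's + 'a) \<Rightarrow> 'p \<Rightarrow> real" where
  "factor_deriv (Action b m t) x = Dpol \<phi> (ego_hist T obs (ss_of x) b (m * T + t)) (as_of x b m t)"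
| "factor_deriv _ x = (\<lambda>_. 0)"

lemma has_derivative_factor: "((\<lambda>p. factor p v x) has_derivative factor_deriv v x) (at \<phi>)"
  by (cases v) (simp_all add: pol_deriv)

definition action_prob_deriv :: "nat \<Rightarrow> nat \<Rightarrow> (traj_var \<Rightarrow> 'c + 's + 'a) \<Rightarrow> 'p \<Rightarrow> real" where
  "action_prob_deriv b l x d = Dpol \<phi> (ego_hist T obs (ss_of x) b l) (ego_act T (as_of x) b l) d
     * (\<Prod>v\<in>vars - {action_at b l}. factor \<phi> v x)"

lemma sum_factor_deriv:
  "(\<Sum>v\<in>vars. factor_deriv v x d * (\<Prod>u\<in>vars - {v}. factor \<phi> u x))
    = (\<Sum>b<B. \<Sum>l<M * T. action_prob_deriv b l x d)"
proof -
  let ?A = "(\<lambda>(b, l). action_at b l) ` ({..<B} \<times> {..<M * T})"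
  let ?g = "\<lambda>v. factor_deriv v x d * (\<Prod>u\<in>vars - {v}. factor \<phi> u x)"
  have "?g v = 0" if "v \<in> vars - ?A" for v
  proof (cases v)
    case (Action b m t)
    with that have "t < T" and "b < B" and "m * T + t < M * T"
      using index_in_episode_less by auto
    with Action that show ?thesis
      by (auto simp: Action_eq_action_at)
  qed simp_all
  then have "(\<Sum>v\<in>vars. ?g v) = (\<Sum>v\<in>?A. ?g v)"
    using action_at_in_vars by (intro sum.mono_neutral_right) auto
  also have "\<dots> = (\<Sum>(b, l)\<in>{..<B} \<times> {..<M * T}. ?g (action_at b l))"
    by (subst sum.reindex) (auto simp: inj_on_def action_at_eq_iff split_def)
  also have "\<dots> = (\<Sum>b<B. \<Sum>l<M * T. action_prob_deriv b l x d)"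
    by (simp add: sum.cartesian_product action_at_def action_prob_deriv_def ego_act_def)
  finally show ?thesis .
qed

lemma has_derivative_Jbar_factors:
  "(Jbar B M T initC U reset K obs rew pol has_derivative
     (\<lambda>d. \<Sum>x\<in>Pi\<^sub>E vars var_dom.
        (\<Sum>b<B. \<Sum>l<M * T. action_prob_deriv b l x d) * batch_return (ss_of x) (as_of x))) (at \<phi>)"
proof -
  have "Jbar B M T initC U reset K obs rew pol
      = (\<lambda>p. \<Sum>x\<in>Pi\<^sub>E vars var_dom. (\<Prod>v\<in>vars. factor p v x) * batch_return (ss_of x) (as_of x))"
    by (rule ext) (rule Jbar_eq_sum_factors)
  moreover have "((\<lambda>p. \<Sum>x\<in>Pi\<^sub>E vars var_dom. (\<Prod>v\<in>vars. factor p v x) * batch_return (ss_of x) (as_of x))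
      has_derivative (\<lambda>d. \<Sum>x\<in>Pi\<^sub>E vars var_dom.
        (\<Sum>v\<in>vars. factor_deriv v x d * (\<Prod>u\<in>vars - {v}. factor \<phi> u x)) * batch_return (ss_of x) (as_of x)))
      (at \<phi>)"
    by (intro has_derivative_sum has_derivative_mult_left has_derivative_prod has_derivative_factor)
  ultimately show ?thesis
    by (simp add: sum_factor_deriv)
qed

definition log_policy_deriv ::
    "(nat \<Rightarrow> nat \<Rightarrow> nat \<Rightarrow> 's) \<Rightarrow> (nat \<Rightarrow> nat \<Rightarrow> nat \<Rightarrow> 'a) \<Rightarrow> nat \<Rightarrow> nat \<Rightarrow> 'p \<Rightarrow> real" where
  "log_policy_deriv ss as b l d = Dpol \<phi> (ego_hist T obs ss b l) (ego_act T as b l) d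
     / pmf (pol \<phi> (ego_hist T obs ss b l)) (ego_act T as b l)"

text \<open>Where the action has probability zero both sides vanish: the quotient is a division by
  zero, and the derivative of a nonnegative function at a zero is zero.\<close>

lemma prob_times_log_policy_deriv:
  assumes "b < B" and "l < M * T"
  shows "(\<Prod>v\<in>vars. factor \<phi> v x) * log_policy_deriv (ss_of x) (as_of x) b l d = action_prob_deriv b l x d"
proof -
  let ?h = "ego_hist T obs (ss_of x) b l"
  let ?a = "ego_act T (as_of x) b l"
  have "(\<Prod>v\<in>vars. factor \<phi> v x) = factor \<phi> (action_at b l) x * (\<Prod>v\<in>vars - {action_at b l}. factor \<phi> v x)"
    using finite_vars action_at_in_vars[OF assms] by (rule prod.remove)
  then have "(\<Prod>v\<in>vars. factor \<phi> v x) = pmf (pol \<phi> ?h) ?a * (\<Prod>v\<in>vars - {action_at b l}. factor \<phi> v x)"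
    by (simp only: factor_action_at)
  moreover have "Dpol \<phi> ?h ?a = (\<lambda>_. 0)" if "pmf (pol \<phi> ?h) ?a = 0"
    using pol_deriv that by (rule has_derivative_pmf_at_zero)
  ultimately show ?thesis
    by (cases "pmf (pol \<phi> ?h) ?a = 0") (simp_all add: action_prob_deriv_def log_policy_deriv_def)
qed

lemma sum_action_prob_deriv_times_nondownstream_reward:
  assumes "b < B" and "l < M * T" and "b' < B" and "\<not> downstream T b l b' l'"
  shows "(\<Sum>x\<in>Pi\<^sub>E vars var_dom. action_prob_deriv b l x d * long_rew T rew (ss_of x) (as_of x) b' l') = 0"
proof -
  let ?k = "action_at b l"
  let ?g = "\<lambda>x. long_rew T rew (ss_of x) (as_of x) b' l'"
  let ?h = "\<lambda>x. Dpol \<phi> (ego_hist T obs (ss_of x) b l) (ego_act T (as_of x) b l) d"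
  have "(\<Sum>x\<in>Pi\<^sub>E vars var_dom. ?g x * ?h x * (\<Prod>v\<in>vars - {?k}. factor \<phi> v x)) = 0"
  proof (rule sum_PiE_score_zero[where r = "rank b"])
    show "?k \<in> vars"
      using assms(1,2) by (rule action_at_in_vars)
    show "?g (x(v:=w)) = ?g x" if "rank b ?k \<le> rank b v" for x v w
      using rank_reward_before_action[OF assms(3,4)] that by (intro long_rew_cong) auto
    show "?h (x(v:=w)) = ?h x" if "rank b ?k < rank b v" for x v w
    proof -
      have "rank b (State b (k div T) (k mod T)) < rank b v" if "k \<le> l" for k
        using rank_history_before_action[OF that, of b b] \<open>rank b ?k < rank b v\<close>
        unfolding action_at_def by order
      then have "State b (k div T) (k mod T) \<noteq> v" if "k \<le> l" for k
        using that by blast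
      then have "ego_hist T obs (ss_of (x(v:=w))) b l = ego_hist T obs (ss_of x) b l"
        by (intro ego_hist_cong) auto
      moreover have "ego_act T (as_of (x(v:=w))) b l = ego_act T (as_of x) b l"
        using that unfolding ego_act_def action_at_def by (intro as_of_cong) auto
      ultimately show ?thesis
        by simp
    qed
    show "(\<Sum>w\<in>var_dom ?k. ?h (x(?k:=w))) = 0" for x
    proof -
      have "ss_of (x(?k:=w)) = ss_of x" for w
        by (simp add: ss_of_def action_at_def)
      moreover have "ego_act T (as_of (x(?k := Inr (Inr a)))) b l = a" for a
        using action_at_in_vars[OF assms(1,2)] by (simp add: as_of_def action_at_def ego_act_def)
      ultimately show ?thesis
        unfolding action_at_def sum_var_dom
        using has_derivative_pmf_sum_zero[OF pol_deriv] by (simp add: action_at_def[symmetric])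
    qed
  qed (use factor_fun_upd_later factor_normalized inj_on_rank in auto)
  then show ?thesis
    by (simp add: action_prob_deriv_def mult_ac)
qed

lemma sum_action_prob_deriv_times_nondownstream_return:
  assumes "b < B" and "l < M * T"
  shows "(\<Sum>x\<in>Pi\<^sub>E vars var_dom. action_prob_deriv b l x d * nondownstream_return (ss_of x) (as_of x) b l) = 0"
proof -
  let ?S = "Pi\<^sub>E vars var_dom"
  let ?t = "\<lambda>x b' l'. if downstream T b l b' l' then 0
    else action_prob_deriv b l x d * long_rew T rew (ss_of x) (as_of x) b' l'"
  have "(\<Sum>x\<in>?S. action_prob_deriv b l x d * nondownstream_return (ss_of x) (as_of x) b l)
      = (1 / real B) * (\<Sum>x\<in>?S. \<Sum>b'<B. \<Sum>l'<M * T. ?t x b' l')"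
    unfolding nondownstream_return_def sum_distrib_left by (intro sum.cong refl) auto
  also have "(\<Sum>x\<in>?S. \<Sum>b'<B. \<Sum>l'<M * T. ?t x b' l') = (\<Sum>b'<B. \<Sum>l'<M * T. \<Sum>x\<in>?S. ?t x b' l')"
    by (subst sum.swap) (intro sum.cong refl sum.swap)
  also have "\<dots> = 0"
  proof (rule sum.neutral, rule ballI, rule sum.neutral, rule ballI)
    fix b' l'
    assume "b' \<in> {..<B}"
    then show "(\<Sum>x\<in>?S. ?t x b' l') = 0"
      using sum_action_prob_deriv_times_nondownstream_reward[OF assms]
      by (cases "downstream T b l b' l'") auto
  qed
  finally show ?thesis
    by simp
qed

lemma sum_action_prob_deriv_times_batch_return:
  "(\<Sum>x\<in>Pi\<^sub>E vars var_dom. (\<Sum>b<B. \<Sum>l<M * T. action_prob_deriv b l x d) * batch_return (ss_of x) (as_of x))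
    = (\<Sum>x\<in>Pi\<^sub>E vars var_dom. \<Sum>b<B. \<Sum>l<M * T.
         action_prob_deriv b l x d * reward_to_go (ss_of x) (as_of x) b l)"
proof -
  let ?S = "Pi\<^sub>E vars var_dom"
  let ?rtg = "\<lambda>x b l. action_prob_deriv b l x d * reward_to_go (ss_of x) (as_of x) b l"
  let ?nd = "\<lambda>x b l. action_prob_deriv b l x d * nondownstream_return (ss_of x) (as_of x) b l"
  have "(\<Sum>x\<in>?S. (\<Sum>b<B. \<Sum>l<M * T. action_prob_deriv b l x d) * batch_return (ss_of x) (as_of x))
      = (\<Sum>x\<in>?S. \<Sum>b<B. \<Sum>l<M * T. ?rtg x b l + ?nd x b l)"
    unfolding sum_distrib_right by (intro sum.cong refl) (simp add: batch_return_split distrib_left)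
  also have "\<dots> = (\<Sum>x\<in>?S. \<Sum>b<B. \<Sum>l<M * T. ?rtg x b l) + (\<Sum>x\<in>?S. \<Sum>b<B. \<Sum>l<M * T. ?nd x b l)"
    by (simp only: sum.distrib)
  also have "(\<Sum>x\<in>?S. \<Sum>b<B. \<Sum>l<M * T. ?nd x b l) = (\<Sum>b<B. \<Sum>l<M * T. \<Sum>x\<in>?S. ?nd x b l)"
    by (subst sum.swap) (intro sum.cong refl sum.swap)
  also have "\<dots> = 0"
    by (simp add: sum_action_prob_deriv_times_nondownstream_return)
  finally show ?thesis
    by simp
qed

lemma expected_score_times_reward_to_go:
  "(\<Sum>\<tau>\<in>btrajs B M T. traj_prob B M T initC U reset K obs pol \<phi> \<tau> *
      (case \<tau> of (cs, ss, as) \<Rightarrow> \<Sum>b<B. \<Sum>l<M * T. log_policy_deriv ss as b l d * reward_to_go ss as b l))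
    = (\<Sum>x\<in>Pi\<^sub>E vars var_dom. \<Sum>b<B. \<Sum>l<M * T.
         action_prob_deriv b l x d * reward_to_go (ss_of x) (as_of x) b l)"
  unfolding sum_btrajs_decode traj_prob_decode
proof (rule sum.cong[OF refl])
  fix x
  show "(\<Prod>v\<in>vars. factor \<phi> v x) * (case decode x of (cs, ss, as) \<Rightarrow>
        \<Sum>b<B. \<Sum>l<M * T. log_policy_deriv ss as b l d * reward_to_go ss as b l)
      = (\<Sum>b<B. \<Sum>l<M * T. action_prob_deriv b l x d * reward_to_go (ss_of x) (as_of x) b l)"
    unfolding decode_def prod.case sum_distrib_left
    by (intro sum.cong refl)
      (simp only: lessThan_iff mult.assoc[symmetric] prob_times_log_policy_deriv)
qed

lemma has_derivative_Jbar:
  "(Jbar B M T initC U reset K obs rew pol has_derivative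
     (\<lambda>d. \<Sum>\<tau>\<in>btrajs B M T. traj_prob B M T initC U reset K obs pol \<phi> \<tau> *
        (case \<tau> of (cs, ss, as) \<Rightarrow> \<Sum>b<B. \<Sum>l<M * T. log_policy_deriv ss as b l d * reward_to_go ss as b l)))
   (at \<phi>)"
  by (rule has_derivative_eq_rhs[OF has_derivative_Jbar_factors])
    (simp only: sum_action_prob_deriv_times_batch_return expected_score_times_reward_to_go)

end

end

theorem theorem1:
  fixes B M T :: nat
    and initC :: "'c::finite pmf"
    and U :: "'c \<Rightarrow> ('s::finite list \<times> 'a::finite list) list \<Rightarrow> 'c pmf"
    and reset :: "'c \<Rightarrow> 's pmf"
    and K :: "'c \<Rightarrow> 's \<Rightarrow> 'a \<Rightarrow> 's pmf"
    and obs :: "'s \<Rightarrow> 'o::finite"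
    and rew :: "'s \<Rightarrow> 'a \<Rightarrow> 's \<Rightarrow> real"
    and pol :: "'p::real_normed_vector \<Rightarrow> 'o list \<Rightarrow> 'a pmf"
    and Dpol :: "'p \<Rightarrow> 'o list \<Rightarrow> 'a \<Rightarrow> 'p \<Rightarrow> real"
    and \<phi> :: 'p
  assumes "0 < B" and "0 < M" and "0 < T"
    and diff: "\<And>x h a. ((\<lambda>y. pmf (pol y h) a) has_derivative Dpol x h a) (at x)"
  shows "(Jbar B M T initC U reset K obs rew pol has_derivative
           (\<lambda>d. \<Sum>\<tau>\<in>btrajs B M T. traj_prob B M T initC U reset K obs pol \<phi> \<tau> *
              (case \<tau> of (cs, ss, as) \<Rightarrow>
                 \<Sum>b<B. \<Sum>l<M * T.
                   (Dpol \<phi> (ego_hist T obs ss b l) (ego_act T as b l) d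
                      / pmf (pol \<phi> (ego_hist T obs ss b l)) (ego_act T as b l)) *
                   ((1 / real B) * (\<Sum>l'\<in>{l..<(l div T + 1) * T}. long_rew T rew ss as b l')
                    + (1 / real B) * (\<Sum>b'<B. \<Sum>l'\<in>{(l div T + 1) * T..<M * T}.
                                          long_rew T rew ss as b' l')))))
         (at \<phi>)"
proof -
  interpret batched_shaping B M T initC U reset K obs rew pol
    using \<open>0 < M\<close> \<open>0 < T\<close> by unfold_locales
  from has_derivative_Jbar[OF diff, of \<phi>] show ?thesis
    unfolding log_policy_deriv_def[OF diff] reward_to_go_def .
qed

end
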